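(* For every cycle $C$ on at least $4$ vertices, $4\le\pi_T(C)\le 6$.
   Context: A sequence is nonrepetitive if no block of consecutive terms has the form $r_1\dots r_nr_1\dots r_n$ with $n\ge1$. A (strong) total Thue colouring of a graph $G$ is a colouring of $V(G)\cup E(G)$ such that for every path $v_1,e_1,v_2,\dots,e_{k-1},v_k$ in $G$ the sequence of colours of $v_1,e_1,\dots,v_k$ is nonrepetitive, the sequence of colours of $v_1,\dots,v_k$ is nonrepetitive, and the sequence of colours of $e_1,\dots,e_{k-1}$ is nonrepetitive. $\pi_T(G)$ is the minimum number of colours in a total Thue colouring of $G$. *)

theory Defs
  imports Main
begin

definition nonrepetitive :: "'c list \<Rightarrow> bool" where
  "nonrepetitive xs \<longleftrightarrow> \<not> (\<exists>u r w. r \<noteq> [] \<and> xs = u @ r @ r @ w)"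

definition is_path :: "'a set \<Rightarrow> 'a set set \<Rightarrow> 'a list \<Rightarrow> bool" where
  "is_path V E vs \<longleftrightarrow> vs \<noteq> [] \<and> distinct vs \<and> set vs \<subseteq> V \<and>
     (\<forall>i. Suc i < length vs \<longrightarrow> {vs ! i, vs ! Suc i} \<in> E)"

definition edge_seq :: "('a set \<Rightarrow> 'c) \<Rightarrow> 'a list \<Rightarrow> 'c list" where
  "edge_seq ce vs = map (\<lambda>(a, b). ce {a, b}) (zip vs (tl vs))"

fun total_seq :: "('a \<Rightarrow> 'c) \<Rightarrow> ('a set \<Rightarrow> 'c) \<Rightarrow> 'a list \<Rightarrow> 'c list" where
  "total_seq cv ce [] = []"
| "total_seq cv ce [v] = [cv v]"
| "total_seq cv ce (v # w # vs) = cv v # ce {v, w} # total_seq cv ce (w # vs)"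

definition total_thue_colouring ::
  "'a set \<Rightarrow> 'a set set \<Rightarrow> ('a \<Rightarrow> 'c) \<Rightarrow> ('a set \<Rightarrow> 'c) \<Rightarrow> bool" where
  "total_thue_colouring V E cv ce \<longleftrightarrow>
     (\<forall>vs. is_path V E vs \<longrightarrow>
        nonrepetitive (total_seq cv ce vs) \<and>
        nonrepetitive (map cv vs) \<and>
        nonrepetitive (edge_seq ce vs))"

definition pi_T :: "'a set \<Rightarrow> 'a set set \<Rightarrow> nat" where
  "pi_T V E = (LEAST k. \<exists>cv ce. (\<forall>v\<in>V. cv v < k) \<and> (\<forall>e\<in>E. ce e < k) \<and>
                  total_thue_colouring V E (cv :: 'a \<Rightarrow> nat) (ce :: 'a set \<Rightarrow> nat))"

end

theory Submission
  imports Defs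
begin

text \<open>Lower bound: on a path a b c d the colours of a, ab, b are pairwise distinct, and with
  only three colours the nonrepetitiveness of the three sequences forces the colours of bc, c, cd
  to repeat them, giving a square.

  Upper bound: colour the vertex f i by letter i of Thue's square-free ternary word, derived from
  the overlap-free Thue--Morse word, except that f (n - 1) gets a fourth colour, which breaks every
  square wrapping around the cycle; colour the edges likewise from a disjoint palette. Every path
  is an arc of the cycle, so its vertex and edge sequences are square-free. A square of even
  length in the interleaved total sequence halves to a square of vertex colours; one of odd length
  matches every term with a term of the other kind, so all its terms lie in the two colours the
  palettes share, impossible since adjacent terms differ.\<close>

section \<open>Nonrepetitive sequences\<close>

lemma nonrepetitive_iff_nth:
  "nonrepetitive xs \<longleftrightarrow>
     (\<forall>q k. 0 < k \<longrightarrow> q + 2 * k \<le> length xs \<longrightarrow> (\<exists>j<k. xs ! (q + j) \<noteq> xs ! (q + k + j)))"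
proof
  assume nr: "nonrepetitive xs"
  show "\<forall>q k. 0 < k \<longrightarrow> q + 2 * k \<le> length xs \<longrightarrow> (\<exists>j<k. xs ! (q + j) \<noteq> xs ! (q + k + j))"
  proof (intro allI impI, rule ccontr)
    fix q k assume k: "0 < k" "q + 2 * k \<le> length xs" and "\<not> (\<exists>j<k. xs ! (q + j) \<noteq> xs ! (q + k + j))"
    then have sq: "xs ! (q + j) = xs ! (q + k + j)" if "j < k" for j using that by blast
    define r where "r = take k (drop q xs)"
    have "take k (drop k (drop q xs)) = r"
      unfolding r_def by (rule nth_equalityI) (use k sq in \<open>auto simp: add.commute add.left_commute\<close>)
    then have "xs = take q xs @ r @ r @ drop k (drop k (drop q xs))"
      unfolding r_def by (metis append_take_drop_id)
    moreover have "r \<noteq> []" using k unfolding r_def by simp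
    ultimately show False using nr unfolding nonrepetitive_def by blast
  qed
next
  assume H: "\<forall>q k. 0 < k \<longrightarrow> q + 2 * k \<le> length xs \<longrightarrow> (\<exists>j<k. xs ! (q + j) \<noteq> xs ! (q + k + j))"
  show "nonrepetitive xs"
    unfolding nonrepetitive_def
  proof (intro notI, elim exE conjE)
    fix u r w assume "r \<noteq> []" and xs: "xs = u @ r @ r @ w"
    then obtain j where "j < length r" "xs ! (length u + j) \<noteq> xs ! (length u + length r + j)"
      using H[rule_format, of "length r" "length u"] by auto
    then show False unfolding xs by (simp add: nth_append)
  qed
qed

lemma nonrepetitive_map_upt_iff:
  "nonrepetitive (map g [0..<N]) \<longleftrightarrow>
     (\<forall>q k. 0 < k \<longrightarrow> q + 2 * k \<le> N \<longrightarrow> (\<exists>j<k. g (q + j) \<noteq> g (q + k + j)))"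
proof -
  have "(\<exists>j<k. map g [0..<N] ! (q + j) \<noteq> map g [0..<N] ! (q + k + j)) \<longleftrightarrow>
      (\<exists>j<k. g (q + j) \<noteq> g (q + k + j))" if "q + 2 * k \<le> N" for q k
    using that by (intro ex_cong1) (auto simp: add.assoc)
  then show ?thesis unfolding nonrepetitive_iff_nth by auto
qed

lemma nonrepetitive_rev_iff: "nonrepetitive (rev xs) \<longleftrightarrow> nonrepetitive xs"
proof -
  have "nonrepetitive (rev ys)" if "nonrepetitive ys" for ys :: "'a list"
    using that unfolding nonrepetitive_def
    by (metis rev_append rev_is_Nil_conv append.assoc rev_rev_ident)
  then show ?thesis by (metis rev_rev_ident)
qed

section \<open>The Thue--Morse word and Thue's ternary word\<close>

text \<open>thue_morse n is the parity of the binary digit sum of n.\<close>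
fun thue_morse :: "nat \<Rightarrow> bool" where
  "thue_morse 0 = False"
| "thue_morse (Suc n) = (thue_morse (Suc n div 2) \<noteq> odd (Suc n))"

declare thue_morse.simps(2) [simp del]

lemma thue_morse_double_plus:
  assumes "r < 2" shows "thue_morse (2 * m + r) = (thue_morse m \<noteq> odd r)"
proof (cases "2 * m + r")
  case 0 then show ?thesis by simp
next
  case (Suc p)
  have "Suc p div 2 = m" "odd (Suc p) \<longleftrightarrow> odd r" using Suc assms by presburger+
  then show ?thesis using Suc thue_morse.simps(2)[of p] by simp
qed

lemma thue_morse_double [simp]: "thue_morse (2 * m) = thue_morse m"
  using thue_morse_double_plus[of 0 m] by simp

lemma thue_morse_double_Suc [simp]: "thue_morse (Suc (2 * m)) = (\<not> thue_morse m)"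
  using thue_morse_double_plus[of 1 m] by simp

lemma thue_morse_even_neq_Suc: "even m \<Longrightarrow> thue_morse m \<noteq> thue_morse (Suc m)"
  by (elim evenE) simp

lemma thue_morse_odd_neq_Suc_iff:
  "thue_morse (Suc (2 * a)) \<noteq> thue_morse (Suc (Suc (2 * a))) \<longleftrightarrow> thue_morse a = thue_morse (Suc a)"
  using thue_morse_double[of "Suc a"] by simp

lemma thue_morse_not_three_equal:
  "\<not> (thue_morse a = thue_morse (Suc a) \<and> thue_morse (Suc a) = thue_morse (Suc (Suc a)))"
  using thue_morse_even_neq_Suc[of a] thue_morse_even_neq_Suc[of "Suc a"] by (cases "even a") auto

lemma thue_morse_no_odd_overlap:
  assumes "odd k"
  shows "\<exists>j\<le>k. thue_morse (i + j) \<noteq> thue_morse (i + j + k)"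
proof (rule ccontr)
  assume "\<not> ?thesis"
  then have overlap: "thue_morse (i + j) = thue_morse (i + j + k)" if "j \<le> k" for j
    using that by auto
  \<comment> \<open>One of m, m + k is even, and the overlap links the two positions.\<close>
  have alternating: "thue_morse m \<noteq> thue_morse (Suc m) \<and> thue_morse (m + k) \<noteq> thue_morse (Suc (m + k))"
    if "i \<le> m" "m < i + k" for m
  proof -
    have "thue_morse m = thue_morse (m + k)" "thue_morse (Suc m) = thue_morse (Suc m + k)"
      using overlap[of "m - i"] overlap[of "Suc m - i"] that by auto
    moreover have "even m \<or> even (m + k)" using assms by auto
    ultimately show ?thesis using thue_morse_even_neq_Suc[of m] thue_morse_even_neq_Suc[of "m + k"] by auto
  qed
  have alternating_window: "thue_morse m \<noteq> thue_morse (Suc m)" if "i \<le> m" "m < i + 2 * k" for m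
  proof (cases "m < i + k")
    case True
    then show ?thesis using alternating[of m] that by blast
  next
    case False
    then have "i \<le> m - k" "m - k < i + k" "m - k + k = m" using that by auto
    then show ?thesis using alternating[of "m - k"] by metis
  qed
  show False
  proof (cases "k = 1")
    case True
    then show False using overlap[of 0] alternating[of i] by simp
  next
    case False
    with assms have "3 \<le> k" by presburger
    define a where "a = i div 2"
    have "i \<le> Suc (2 * a)" "Suc (2 * Suc a) < i + 2 * k" using \<open>3 \<le> k\<close> unfolding a_def by auto
    then have "thue_morse a = thue_morse (Suc a)" "thue_morse (Suc a) = thue_morse (Suc (Suc a))"
      using alternating_window[of "Suc (2 * a)"] alternating_window[of "Suc (2 * Suc a)"]
        thue_morse_odd_neq_Suc_iff[of a] thue_morse_odd_neq_Suc_iff[of "Suc a"]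
      by (simp_all only: mult_Suc_right add_2_eq_Suc) auto
    then show False using thue_morse_not_three_equal[of a] by simp
  qed
qed

lemma thue_morse_overlap_free:
  assumes "0 < k" shows "\<exists>j\<le>k. thue_morse (i + j) \<noteq> thue_morse (i + j + k)"
  using assms
proof (induction k arbitrary: i rule: less_induct)
  case (less k)
  show ?case
  proof (cases "odd k")
    case True
    then show ?thesis by (rule thue_morse_no_odd_overlap)
  next
    case False
    then have "even k" by simp
    then obtain h where k: "k = 2 * h" by (rule evenE)
    with less.prems have "0 < h" "h < k" by auto
    define b r where "b = i div 2" and "r = i mod 2"
    have "r < 2" and i: "i = 2 * b + r" unfolding b_def r_def by simp_all
    obtain j where "j \<le> h" "thue_morse (b + j) \<noteq> thue_morse (b + j + h)"
      using less.IH[OF \<open>h < k\<close> \<open>0 < h\<close>] by blast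
    moreover have "2 * (b + j) + r = i + 2 * j" "2 * (b + j + h) + r = i + 2 * j + k"
      using i k by simp_all
    ultimately have "thue_morse (i + 2 * j) \<noteq> thue_morse (i + 2 * j + k)"
      using thue_morse_double_plus[OF \<open>r < 2\<close>, of "b + j"]
        thue_morse_double_plus[OF \<open>r < 2\<close>, of "b + j + h"] by metis
    then show ?thesis using \<open>j \<le> h\<close> k by (intro exI[of _ "2 * j"]) auto
  qed
qed

definition square_free :: "(nat \<Rightarrow> 'a) \<Rightarrow> bool" where
  "square_free w \<longleftrightarrow> (\<forall>q k. 0 < k \<longrightarrow> (\<exists>j<k. w (q + j) \<noteq> w (q + k + j)))"

lemma square_free_Suc_neq: "square_free w \<Longrightarrow> w a \<noteq> w (Suc a)"
  unfolding square_free_def by (drule spec[of _ a], drule spec[of _ 1]) simp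

lemma square_free_comp:
  assumes "square_free w" "inj_on h (range w)" shows "square_free (h \<circ> w)"
  unfolding square_free_def
proof (intro allI impI)
  fix q k :: nat assume "0 < k"
  then obtain j where "j < k" "w (q + j) \<noteq> w (q + k + j)"
    using assms(1) unfolding square_free_def by blast
  then show "\<exists>j<k. (h \<circ> w) (q + j) \<noteq> (h \<circ> w) (q + k + j)"
    using assms(2) by (auto dest: inj_onD)
qed

text \<open>Thue's square-free ternary word: the letter at n records whether the Thue--Morse word
  changes between n and n + 1, and if so in which direction.\<close>
definition thue_ternary :: "nat \<Rightarrow> nat" where
  "thue_ternary n = (if thue_morse n = thue_morse (Suc n) then 1 else if thue_morse n then 0 else 2)"

lemma thue_ternary_less: "thue_ternary n < 3"
  by (simp add: thue_ternary_def)

lemma thue_ternary_eq_imp_change_eq: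
  "thue_ternary a = thue_ternary b \<Longrightarrow>
     (thue_morse a = thue_morse b \<longleftrightarrow> thue_morse (Suc a) = thue_morse (Suc b))"
  by (auto simp: thue_ternary_def split: if_splits)

lemma thue_ternary_eq_imp_no_change:
  "thue_ternary a = thue_ternary b \<Longrightarrow> thue_morse a \<noteq> thue_morse b \<Longrightarrow> thue_morse a = thue_morse (Suc a)"
  by (auto simp: thue_ternary_def split: if_splits)

lemma square_free_thue_ternary: "square_free thue_ternary"
  unfolding square_free_def
proof (intro allI impI, rule ccontr)
  fix q k :: nat assume "0 < k" and "\<not> (\<exists>j<k. thue_ternary (q + j) \<noteq> thue_ternary (q + k + j))"
  then have square: "thue_ternary (q + j) = thue_ternary (q + k + j)" if "j < k" for j
    using that by blast
  have shift_eq: "thue_morse (q + j) = thue_morse (q + k + j) \<longleftrightarrow> thue_morse q = thue_morse (q + k)"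
    if "j \<le> k" for j
    using that
  proof (induction j)
    case (Suc j)
    then have "thue_morse (q + j) = thue_morse (q + k + j) \<longleftrightarrow>
        thue_morse (q + Suc j) = thue_morse (q + k + Suc j)"
      using thue_ternary_eq_imp_change_eq[OF square[of j]] by simp
    with Suc show ?case by simp
  qed simp
  show False
  proof (cases "thue_morse q = thue_morse (q + k)")
    case True
    then have "\<forall>j\<le>k. thue_morse (q + j) = thue_morse (q + j + k)"
      using shift_eq by (simp add: add.commute add.left_commute)
    then show False using thue_morse_overlap_free[OF \<open>0 < k\<close>, of q] by blast
  next
    case False
    \<comment> \<open>The two halves of the square then disagree everywhere, forcing the letter 1 throughout.\<close>
    have "thue_morse (q + j) = thue_morse q" if "j \<le> k" for j
      using that
    proof (induction j)
      case (Suc j)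
      then have "thue_morse (q + j) = thue_morse (Suc (q + j))"
        using thue_ternary_eq_imp_no_change[OF square] shift_eq False by simp
      with Suc show ?case by simp
    qed simp
    from this[of k] False show False by simp
  qed
qed

section \<open>Windows of a cycle and interleaved sequences\<close>

lemma mod_window_below_last:
  fixes n p m :: nat
  assumes "0 < n" and "\<forall>j<m. (p + j) mod n \<noteq> n - 1"
  shows "p mod n + m \<le> n - 1"
proof (rule ccontr)
  assume "\<not> p mod n + m \<le> n - 1"
  then have "n - 1 - p mod n < m" using mod_less_divisor[of n p] assms(1) by linarith
  moreover have "p mod n + (n - 1 - p mod n) = n - 1" using mod_less_divisor[of n p] assms(1) by linarith
  then have "(p + (n - 1 - p mod n)) mod n = n - 1"
    using assms(1) by (metis mod_add_left_eq mod_less diff_less zero_less_one)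
  ultimately show False using assms(2) by blast
qed

lemma nonrepetitive_cyclic_window:
  assumes "square_free w" and "\<forall>i. w i \<noteq> c" and "N \<le> n"
  shows "nonrepetitive (map (\<lambda>j. (w(n - 1 := c)) ((p + j) mod n)) [0..<N])"
  unfolding nonrepetitive_map_upt_iff
proof (intro allI impI)
  fix q k :: nat assume k: "0 < k" "q + 2 * k \<le> N"
  define w' where "w' = w(n - 1 := c)"
  define p' where "p' = p + q"
  have "k < n" using k assms(3) by linarith
  have marker: "w' i = c \<longleftrightarrow> i = n - 1" for i using assms(2) unfolding w'_def by auto
  have "\<exists>j<k. w' ((p' + j) mod n) \<noteq> w' ((p' + k + j) mod n)"
  proof (cases "\<exists>j<2 * k. (p' + j) mod n = n - 1")
    case True
    \<comment> \<open>The marker meets its partner half a square away, which is a different residue.\<close>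
    then obtain j where j: "j < 2 * k" "(p' + j) mod n = n - 1" by blast
    define j0 where "j0 = (if j < k then j else j - k)"
    have "j0 < k" and j0: "p' + j = p' + j0 \<or> p' + j = p' + k + j0"
      unfolding j0_def using j by auto
    have "(p' + j0) mod n \<noteq> (p' + k + j0) mod n"
      using mod_eq_dvd_iff_nat[of "p' + j0" "p' + k + j0" n] nat_dvd_not_less[OF k(1) \<open>k < n\<close>] by simp
    moreover have "(p' + j0) mod n = n - 1 \<or> (p' + k + j0) mod n = n - 1"
      using j0 j(2) by metis
    ultimately have "w' ((p' + j0) mod n) \<noteq> w' ((p' + k + j0) mod n)"
      using marker by metis
    then show ?thesis using \<open>j0 < k\<close> by blast
  next
    case False
    define b where "b = p' mod n"
    have "b + 2 * k \<le> n - 1"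
      unfolding b_def by (rule mod_window_below_last) (use False \<open>k < n\<close> in auto)
    moreover have "(p' + j) mod n = (b + j) mod n" for j
      unfolding b_def by (simp add: mod_add_left_eq)
    ultimately have window: "(p' + j) mod n = b + j" if "j < 2 * k" for j
      using that by simp
    obtain j where "j < k" "w (b + j) \<noteq> w (b + k + j)"
      using assms(1) k(1) unfolding square_free_def by blast
    moreover have "(p' + j) mod n = b + j" "(p' + k + j) mod n = b + k + j"
      using window[of j] window[of "k + j"] \<open>j < k\<close> by (simp_all add: add.assoc)
    moreover have "w' (b + j) = w (b + j)" "w' (b + k + j) = w (b + k + j)"
      using \<open>b + 2 * k \<le> n - 1\<close> \<open>j < k\<close> unfolding w'_def by simp_all
    ultimately show ?thesis by (intro exI[of _ j]) simp
  qed
  then show "\<exists>j<k. (w(n - 1 := c)) ((p + (q + j)) mod n) \<noteq> (w(n - 1 := c)) ((p + (q + k + j)) mod n)"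
    unfolding w'_def p'_def by (simp add: add.assoc)
qed

definition interleave :: "(nat \<Rightarrow> 'a) \<Rightarrow> (nat \<Rightarrow> 'a) \<Rightarrow> nat \<Rightarrow> 'a" where
  "interleave v e m = (if even m then v (m div 2) else e (m div 2))"

lemma interleave_even_square:
  assumes "\<forall>j<2 * h. interleave v e (q + j) = interleave v e (q + 2 * h + j)"
  shows "\<forall>j<h. v ((q + 1) div 2 + j) = v ((q + 1) div 2 + h + j)"
proof (intro allI impI)
  fix j assume "j < h"
  define a where "a = (q + 1) div 2"
  define d where "d = 2 * (a + j) - q"
  have "d < 2 * h" and d: "2 * (a + j) = q + d" "2 * (a + h + j) = q + 2 * h + d"
    using \<open>j < h\<close> unfolding d_def a_def by presburger+
  have "v (a + j) = interleave v e (2 * (a + j))" by (simp add: interleave_def)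
  also have "\<dots> = interleave v e (2 * (a + h + j))" using assms \<open>d < 2 * h\<close> unfolding d by simp
  also have "\<dots> = v (a + h + j)" by (simp add: interleave_def)
  finally show "v (a + j) = v (a + h + j)" .
qed

lemma interleave_no_odd_square:
  assumes adjacent: "\<And>m. interleave v e m \<noteq> interleave v e (Suc m)"
    and v_Suc: "\<And>a. v a \<noteq> v (Suc a)"
    and shared: "\<And>a b. v a = e b \<Longrightarrow> v a = \<alpha> \<or> v a = \<beta>"
    and "odd k"
  shows "\<exists>j<k. interleave v e (q + j) \<noteq> interleave v e (q + k + j)"
proof (rule ccontr)
  let ?T = "interleave v e"
  assume "\<not> ?thesis"
  then have square: "?T (q + j) = ?T (q + k + j)" if "j < k" for j using that by blast
  have partner: "?T x = \<alpha> \<or> ?T x = \<beta>" if "odd (x + y)" "?T x = ?T y" for x y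
    using that shared[of "x div 2" "y div 2"] shared[of "y div 2" "x div 2"]
    by (cases "even x") (auto simp: interleave_def)
  \<comment> \<open>Each position of the square is matched with one of the other parity.\<close>
  have in_square: "?T m = \<alpha> \<or> ?T m = \<beta>" if "q \<le> m" "m < q + 2 * k" for m
  proof (cases "m < q + k")
    case True
    have "odd (m + (m + k))" using \<open>odd k\<close> by simp
    moreover have "?T m = ?T (m + k)" using square[of "m - q"] that True by (simp add: add.commute)
    ultimately show ?thesis by (rule partner)
  next
    case False
    then have "odd (m - k + m)" using \<open>odd k\<close> by presburger
    moreover have "?T (m - k) = ?T m" using square[of "m - k - q"] that False by simp
    ultimately show ?thesis using partner[of "m - k" m] by simp
  qed
  show False
  proof (cases "k = 1")
    case True
    then show False using square[of 0] adjacent[of q] by simp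
  next
    case False
    then have "3 \<le> k" using \<open>odd k\<close> by presburger
    define m where "m = (if even q then q else Suc q)"
    have "even m" "q \<le> m" "Suc (Suc m) < q + 2 * k" unfolding m_def using \<open>3 \<le> k\<close> by auto
    then have "?T m = ?T (Suc (Suc m))"
      using in_square[of m] in_square[of "Suc m"] in_square[of "Suc (Suc m)"]
        adjacent[of m] adjacent[of "Suc m"] by auto
    then show False using v_Suc[of "m div 2"] \<open>even m\<close> by (auto simp: interleave_def)
  qed
qed

lemma nonrepetitive_interleave:
  assumes vertices: "nonrepetitive (map v [0..<L])"
    and adjacent: "\<And>m. interleave v e m \<noteq> interleave v e (Suc m)"
    and v_Suc: "\<And>a. v a \<noteq> v (Suc a)"
    and shared: "\<And>a b. v a = e b \<Longrightarrow> v a = \<alpha> \<or> v a = \<beta>"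
  shows "nonrepetitive (map (interleave v e) [0..<2 * L - 1])"
  unfolding nonrepetitive_map_upt_iff
proof (intro allI impI)
  fix q k :: nat assume k: "0 < k" "q + 2 * k \<le> 2 * L - 1"
  show "\<exists>j<k. interleave v e (q + j) \<noteq> interleave v e (q + k + j)"
  proof (cases "even k")
    case True
    then obtain h where h: "k = 2 * h" by (rule evenE)
    have "0 < h" "(q + 1) div 2 + 2 * h \<le> L" using k h by auto
    then obtain j where "j < h" "v ((q + 1) div 2 + j) \<noteq> v ((q + 1) div 2 + h + j)"
      using vertices unfolding nonrepetitive_map_upt_iff by blast
    then show ?thesis using interleave_even_square[where h = h and q = q] h by blast
  next
    case False
    then show ?thesis
      by (intro interleave_no_odd_square[where \<alpha> = \<alpha> and \<beta> = \<beta>, OF adjacent v_Suc shared]) simp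
  qed
qed

section \<open>Colour sequences along paths\<close>

lemma total_seq_eq_interleave:
  "vs \<noteq> [] \<Longrightarrow> total_seq cv ce vs =
     map (interleave (\<lambda>j. cv (vs ! j)) (\<lambda>j. ce {vs ! j, vs ! Suc j})) [0..<2 * length vs - 1]"
proof (induction cv ce vs rule: total_seq.induct)
  case (3 cv ce v w vs)
  define m where "m = 2 * length (w # vs) - 1"
  have "[0..<2 * length (v # w # vs) - 1] = 0 # 1 # [2..<m + 2]"
    unfolding m_def by (simp add: upt_conv_Cons numeral_3_eq_3 del: upt.simps)
  also have "[2..<m + 2] = map (\<lambda>m. m + 2) [0..<m]" by (rule map_add_upt[symmetric])
  finally have "[0..<2 * length (v # w # vs) - 1] = 0 # 1 # map (\<lambda>m. m + 2) [0..<m]" .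
  moreover have "total_seq cv ce (w # vs) =
      map (interleave (\<lambda>j. cv ((w # vs) ! j)) (\<lambda>j. ce {(w # vs) ! j, (w # vs) ! Suc j})) [0..<m]"
    using 3 unfolding m_def by simp
  moreover have "(i + 2) div 2 = Suc (i div 2)" for i :: nat by simp
  ultimately show ?case by (simp add: interleave_def del: upt.simps)
qed (simp_all add: interleave_def)

lemma edge_seq_eq_map: "edge_seq ce vs = map (\<lambda>j. ce {vs ! j, vs ! Suc j}) [0..<length vs - 1]"
  unfolding edge_seq_def by (rule nth_equalityI) (auto simp: nth_tl)

lemma total_seq_snoc:
  "total_seq cv ce (vs @ [x]) = (if vs = [] then [cv x] else total_seq cv ce vs @ [ce {last vs, x}, cv x])"
  by (induction cv ce vs rule: total_seq.induct) auto

lemma total_seq_rev: "total_seq cv ce (rev vs) = rev (total_seq cv ce vs)"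
proof (induction vs)
  case (Cons v vs)
  have "total_seq cv ce (rev (v # vs)) =
      (if rev vs = [] then [cv v] else total_seq cv ce (rev vs) @ [ce {last (rev vs), v}, cv v])"
    unfolding rev.simps by (rule total_seq_snoc)
  also have "\<dots> = rev (total_seq cv ce (v # vs))"
    using Cons.IH by (cases vs) (simp_all add: last_rev insert_commute)
  finally show ?case .
qed simp

lemma edge_seq_snoc:
  "edge_seq ce (vs @ [x]) = (if vs = [] then [] else edge_seq ce vs @ [ce {last vs, x}])"
  by (induction vs rule: induct_list012) (simp_all add: edge_seq_def)

lemma edge_seq_rev: "edge_seq ce (rev vs) = rev (edge_seq ce vs)"
proof (induction vs)
  case (Cons v vs)
  have "edge_seq ce (rev (v # vs)) =
      (if rev vs = [] then [] else edge_seq ce (rev vs) @ [ce {last (rev vs), v}])"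
    unfolding rev.simps by (rule edge_seq_snoc)
  also have "\<dots> = rev (edge_seq ce (v # vs))"
    using Cons.IH by (cases vs) (simp_all add: last_rev insert_commute edge_seq_def)
  finally show ?case .
qed (simp add: edge_seq_def)

lemma successively_one_direction:
  assumes "distinct xs" and "set xs \<subseteq> A"
    and "successively (\<lambda>x y. R x y \<or> R y x) xs"
    and functional: "\<And>x y z. R x y \<Longrightarrow> R x z \<Longrightarrow> y = z"
    and injective: "\<And>x y z. x \<in> A \<Longrightarrow> y \<in> A \<Longrightarrow> R x z \<Longrightarrow> R y z \<Longrightarrow> x = y"
  shows "successively R xs \<or> successively (\<lambda>x y. R y x) xs"
  using assms(1-3)
proof (induction xs rule: induct_list012)
  case (3 x y zs)
  then have "successively R (y # zs) \<or> successively (\<lambda>x y. R y x) (y # zs)" by simp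
  moreover have "R x y \<or> R y x" using "3.prems" by simp
  moreover have "x \<noteq> hd zs" "x \<in> A" "hd zs \<in> A" if "zs \<noteq> []"
    using "3.prems" that by (auto simp: hd_in_set dest: subsetD)
  ultimately show ?case
    using functional[of y x "hd zs"] injective[of x "hd zs" y]
    by (cases zs) (auto simp: successively_Cons)
qed simp_all

lemma successively_Suc_mod_eq_map:
  assumes "successively (\<lambda>a b. b = Suc a mod n) xs" and "xs \<noteq> []" and "hd xs < n"
  shows "xs = map (\<lambda>j. (hd xs + j) mod n) [0..<length xs]"
proof (rule nth_equalityI)
  fix j assume "j < length xs"
  then have "xs ! j = (hd xs + j) mod n"
  proof (induction j)
    case 0
    then show ?case using assms(2,3) by (simp add: hd_conv_nth)
  next
    case (Suc j)
    then show ?case using successively_nth[OF assms(1), of j] by (simp add: mod_Suc_eq)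
  qed
  then show "xs ! j = map (\<lambda>j. (hd xs + j) mod n) [0..<length xs] ! j" using \<open>j < length xs\<close> by simp
qed simp

lemma nonrepetitive_nth_neq_Suc: "nonrepetitive xs \<Longrightarrow> Suc i < length xs \<Longrightarrow> xs ! i \<noteq> xs ! Suc i"
  unfolding nonrepetitive_iff_nth by (drule spec[of _ i], drule spec[of _ 1]) simp

lemma total_thue_colouring_path4:
  assumes "total_thue_colouring V E cv ce" and "is_path V E [a, b, c, d]"
  shows "4 \<le> card (set (total_seq cv ce [a, b, c, d]))"
proof (rule ccontr)
  define xs where "xs = total_seq cv ce [a, b, c, d]"
  have xs: "xs = [cv a, ce {a, b}, cv b, ce {b, c}, cv c, ce {c, d}, cv d]" by (simp add: xs_def)
  have nr: "nonrepetitive xs" "nonrepetitive [cv a, cv b, cv c, cv d]"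
    "nonrepetitive [ce {a, b}, ce {b, c}, ce {c, d}]"
    using assms unfolding total_thue_colouring_def xs_def by (auto simp: edge_seq_def)
  have neq: "cv a \<noteq> ce {a, b}" "ce {a, b} \<noteq> cv b" "cv b \<noteq> ce {b, c}" "ce {b, c} \<noteq> cv c"
    "cv c \<noteq> ce {c, d}" "cv a \<noteq> cv b" "cv b \<noteq> cv c" "ce {a, b} \<noteq> ce {b, c}" "ce {b, c} \<noteq> ce {c, d}"
    using nonrepetitive_nth_neq_Suc[OF nr(1), of 0] nonrepetitive_nth_neq_Suc[OF nr(1), of 1]
      nonrepetitive_nth_neq_Suc[OF nr(1), of 2] nonrepetitive_nth_neq_Suc[OF nr(1), of 3]
      nonrepetitive_nth_neq_Suc[OF nr(1), of 4]
      nonrepetitive_nth_neq_Suc[OF nr(2), of 0] nonrepetitive_nth_neq_Suc[OF nr(2), of 1]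
      nonrepetitive_nth_neq_Suc[OF nr(3), of 0] nonrepetitive_nth_neq_Suc[OF nr(3), of 1]
    by (simp_all add: xs)
  assume "\<not> 4 \<le> card (set (total_seq cv ce [a, b, c, d]))"
  then have "card (set xs) \<le> card {cv a, ce {a, b}, cv b}" using neq unfolding xs_def xs by auto
  then have palette: "set xs = {cv a, ce {a, b}, cv b}" by (intro card_seteq[symmetric]) (auto simp: xs)
  then have "ce {b, c} \<in> {cv a, ce {a, b}, cv b}" "cv c \<in> {cv a, ce {a, b}, cv b}"
    "ce {c, d} \<in> {cv a, ce {a, b}, cv b}" unfolding xs by auto
  then have "ce {b, c} = cv a" "cv c = ce {a, b}" "ce {c, d} = cv b" using neq by auto
  then have "xs = [] @ [cv a, ce {a, b}, cv b] @ [cv a, ce {a, b}, cv b] @ [cv d]" unfolding xs by simp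
  then show False using nr(1) unfolding nonrepetitive_def by blast
qed

section \<open>Colouring a cycle\<close>

lemma Suc_mod_inj: "a < n \<Longrightarrow> b < n \<Longrightarrow> Suc a mod n = Suc b mod n \<Longrightarrow> a = b"
  by (auto simp: mod_Suc split: if_splits)

definition rotated_colour :: "nat \<Rightarrow> nat \<Rightarrow> nat" where
  "rotated_colour y c = 3 + (c + 3 - y) mod 3"

lemma rotated_colour: "3 \<le> rotated_colour y c" "rotated_colour y c < 6"
  unfolding rotated_colour_def by auto

lemma rotated_colour_eq_3_iff:
  assumes "c < 3" "y < 3" shows "rotated_colour y c = 3 \<longleftrightarrow> c = y"
proof -
  have "c \<in> {0, 1, 2}" "y \<in> {0, 1, 2}" using assms by auto
  then show ?thesis unfolding rotated_colour_def by auto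
qed

lemma inj_on_rotated_colour:
  assumes "y < 3" shows "inj_on (rotated_colour y) {..<3}"
  unfolding inj_on_def
proof (intro ballI impI)
  fix c d :: nat assume "c \<in> {..<3}" "d \<in> {..<3}" "rotated_colour y c = rotated_colour y d"
  moreover have "c \<in> {0, 1, 2}" "d \<in> {0, 1, 2}" "y \<in> {0, 1, 2}" using calculation assms by auto
  ultimately show "c = d" unfolding rotated_colour_def by auto
qed

locale cycle_graph =
  fixes V :: "'a set" and E :: "'a set set" and f :: "nat \<Rightarrow> 'a" and n :: nat
  assumes three_le: "3 \<le> n"
    and bij: "bij_betw f {0..<n} V"
    and edges: "E = {{f i, f (Suc i mod n)} | i. i < n}"
begin

definition index :: "'a \<Rightarrow> nat" where
  "index v = inv_into {0..<n} f v"

lemma index_f [simp]: "i < n \<Longrightarrow> index (f i) = i"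
  using bij by (simp add: index_def bij_betw_def inv_into_f_f)

lemma f_index [simp]: "v \<in> V \<Longrightarrow> f (index v) = v"
  using bij by (simp add: index_def bij_betw_def f_inv_into_f)

lemma index_less: "v \<in> V \<Longrightarrow> index v < n"
  using bij unfolding index_def bij_betw_def by (metis atLeastLessThan_iff inv_into_into)

lemma f_eq_iff: "i < n \<Longrightarrow> j < n \<Longrightarrow> f i = f j \<longleftrightarrow> i = j"
  by (metis index_f)

lemma edge_cases:
  assumes "a < n" "b < n" "{f a, f b} \<in> E"
  shows "b = Suc a mod n \<or> a = Suc b mod n"
proof -
  obtain i where "i < n" "{f a, f b} = {f i, f (Suc i mod n)}" using assms(3) unfolding edges by blast
  then show ?thesis using assms(1,2) three_le by (auto simp: doubleton_eq_iff f_eq_iff)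
qed

lemma edge_index_unique:
  assumes "i < n" "j < n" "{f i, f (Suc i mod n)} = {f j, f (Suc j mod n)}"
  shows "i = j"
  using assms three_le by (auto simp: doubleton_eq_iff f_eq_iff mod_Suc split: if_splits)

definition arc :: "nat \<Rightarrow> nat \<Rightarrow> 'a list" where
  "arc i L = map (\<lambda>j. f ((i + j) mod n)) [0..<L]"

lemma path_is_arc:
  assumes "is_path V E vs"
  shows "\<exists>i. vs = arc i (length vs) \<or> rev vs = arc i (length vs)"
proof -
  define xs where "xs = map index vs"
  have vs: "vs = map f xs" and "set vs \<subseteq> V" "distinct vs" "vs \<noteq> []"
    using assms unfolding xs_def is_path_def by (auto simp: map_idI subsetD)
  then have "set xs \<subseteq> {..<n}" "xs \<noteq> []" unfolding xs_def by (auto simp: index_less)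
  have "distinct xs" using \<open>distinct vs\<close> vs by (simp add: distinct_map)
  define L where "L = length xs"
  have "successively (\<lambda>a b. {f a, f b} \<in> E) xs"
    using assms unfolding is_path_def successively_conv_nth vs by simp
  then have "successively (\<lambda>a b. b = Suc a mod n \<or> a = Suc b mod n) xs"
    using \<open>set xs \<subseteq> {..<n}\<close> edge_cases by (auto elim!: successively_mono)
  then have "successively (\<lambda>a b. b = Suc a mod n) xs \<or> successively (\<lambda>a b. b = Suc a mod n) (rev xs)"
    by (subst successively_rev, rule successively_one_direction[OF \<open>distinct xs\<close> \<open>set xs \<subseteq> {..<n}\<close>])
      (auto intro: Suc_mod_inj)
  moreover have "hd xs \<in> set xs" "hd (rev xs) \<in> set xs" using \<open>xs \<noteq> []\<close> by (simp_all add: hd_rev)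
  then have "hd xs < n" "hd (rev xs) < n" using \<open>set xs \<subseteq> {..<n}\<close> by auto
  ultimately obtain i where "xs = map (\<lambda>j. (i + j) mod n) [0..<L] \<or> rev xs = map (\<lambda>j. (i + j) mod n) [0..<L]"
    using successively_Suc_mod_eq_map \<open>xs \<noteq> []\<close> unfolding L_def by (metis length_rev rev_is_Nil_conv)
  then have "map f xs = map (\<lambda>j. f ((i + j) mod n)) [0..<L] \<or> map f (rev xs) = map (\<lambda>j. f ((i + j) mod n)) [0..<L]"
    by auto
  then show ?thesis unfolding arc_def vs by (auto simp: rev_map L_def)
qed

lemma path_length_le: "is_path V E vs \<Longrightarrow> length vs \<le> n"
  using bij_betw_same_card[OF bij] bij_betw_finite[OF bij] distinct_card[of vs] card_mono[of V "set vs"]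
  unfolding is_path_def by auto

text \<open>Vertex f i gets letter i of the ternary word, except that f (n - 1) gets the fresh colour
  3, which breaks every square wrapping around the cycle. Edges use the palette 3, 4, 5 through
  rotated_colour closing_colour, which takes the value 3 exactly at the letter closing_colour. The
  closing edge {f (n - 1), f 0} gets closing_colour itself, chosen different from the letters at 0
  and n - 2: so it differs from the colour of f 0, and edge n - 2 avoids the colour 3 of f (n - 1).
  The two palettes share only the colours 3 and closing_colour.\<close>
definition closing_colour :: nat where
  "closing_colour = (if 0 \<notin> {thue_ternary 0, thue_ternary (n - 2)} then 0
     else if 1 \<notin> {thue_ternary 0, thue_ternary (n - 2)} then 1 else 2)"

definition vertex_colour :: "nat \<Rightarrow> nat" where
  "vertex_colour = thue_ternary(n - 1 := 3)"

definition edge_colour :: "nat \<Rightarrow> nat" where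
  "edge_colour = (rotated_colour closing_colour \<circ> thue_ternary)(n - 1 := closing_colour)"

definition cv :: "'a \<Rightarrow> nat" where
  "cv v = vertex_colour (index v)"

definition ce :: "'a set \<Rightarrow> nat" where
  "ce e = edge_colour (SOME i. i < n \<and> e = {f i, f (Suc i mod n)})"

lemma closing_colour: "closing_colour < 3" "closing_colour \<noteq> thue_ternary 0"
  "closing_colour \<noteq> thue_ternary (n - 2)"
  using thue_ternary_less[of 0] thue_ternary_less[of "n - 2"] unfolding closing_colour_def by auto

lemma ce_edge: "i < n \<Longrightarrow> ce {f i, f (Suc i mod n)} = edge_colour i"
  unfolding ce_def using edge_index_unique by (metis (mono_tags, lifting) someI_ex)

lemma colours_less: "vertex_colour i < 6" "edge_colour i < 6"
  using thue_ternary_less[of i] rotated_colour[of closing_colour "thue_ternary i"] closing_colour(1)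
  unfolding vertex_colour_def edge_colour_def by auto

lemma vertex_colour_neq_edge_colour: "vertex_colour i \<noteq> edge_colour i"
  using thue_ternary_less[of i] rotated_colour[of closing_colour "thue_ternary i"] closing_colour(1)
  unfolding vertex_colour_def edge_colour_def by auto

lemma edge_colour_neq_vertex_colour_Suc:
  assumes "i < n" shows "edge_colour i \<noteq> vertex_colour (Suc i mod n)"
proof -
  consider "i = n - 1" | "i = n - 2" | "Suc i < n - 1" using assms three_le by linarith
  then show ?thesis
  proof cases
    case 1
    then have "Suc i mod n = 0" using three_le by simp
    then show ?thesis using 1 three_le closing_colour unfolding vertex_colour_def edge_colour_def by simp
  next
    case 2
    then show ?thesis using three_le closing_colour rotated_colour_eq_3_iff[OF thue_ternary_less closing_colour(1)]
      unfolding vertex_colour_def edge_colour_def by auto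
  qed (use thue_ternary_less[of "Suc i"] rotated_colour(1)[of closing_colour "thue_ternary i"] in
      \<open>auto simp: vertex_colour_def edge_colour_def\<close>)
qed

lemma vertex_colour_neq_Suc:
  assumes "i < n" shows "vertex_colour i \<noteq> vertex_colour (Suc i mod n)"
proof (cases "i = n - 1")
  case True
  then have "Suc i mod n = 0" using three_le by simp
  then show ?thesis using True three_le thue_ternary_less[of 0] unfolding vertex_colour_def by simp
next
  case False
  then show ?thesis using assms thue_ternary_less[of i] square_free_Suc_neq[OF square_free_thue_ternary, of i]
    by (auto simp: vertex_colour_def mod_Suc)
qed

lemma vertex_colour_eq_edge_colour:
  "vertex_colour a = edge_colour b \<Longrightarrow> vertex_colour a = 3 \<or> vertex_colour a = closing_colour"
  using thue_ternary_less[of a] rotated_colour[of closing_colour "thue_ternary b"]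
  unfolding vertex_colour_def edge_colour_def by (auto split: if_splits)

lemma length_arc [simp]: "length (arc i L) = L"
  by (simp add: arc_def)

lemma arc_nth: "j < L \<Longrightarrow> arc i L ! j = f ((i + j) mod n)"
  by (simp add: arc_def)

lemma ce_arc: "Suc j < L \<Longrightarrow> ce {arc i L ! j, arc i L ! Suc j} = edge_colour ((i + j) mod n)"
  using ce_edge[of "(i + j) mod n"] three_le by (simp add: arc_nth mod_Suc_eq)

lemma arc_colour_sequences:
  fixes i L :: nat
  defines "vc \<equiv> \<lambda>j. vertex_colour ((i + j) mod n)" and "ec \<equiv> \<lambda>j. edge_colour ((i + j) mod n)"
  shows "map cv (arc i L) = map vc [0..<L]"
    and "edge_seq ce (arc i L) = map ec [0..<L - 1]"
    and "0 < L \<Longrightarrow> total_seq cv ce (arc i L) = map (interleave vc ec) [0..<2 * L - 1]"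
proof -
  have cv_arc: "cv (arc i L ! j) = vc j" if "j < L" for j
    using that three_le by (simp add: cv_def vc_def arc_nth)
  show "map cv (arc i L) = map vc [0..<L]"
    by (rule nth_equalityI) (simp_all add: cv_arc)
  show "edge_seq ce (arc i L) = map ec [0..<L - 1]"
    unfolding edge_seq_eq_map by (rule nth_equalityI) (simp_all add: ce_arc ec_def)
  assume "0 < L"
  then have "arc i L \<noteq> []" by (metis length_arc length_greater_0_conv)
  have ce_arc_odd: "ce {arc i L ! (m div 2), arc i L ! Suc (m div 2)} = ec (m div 2)"
    if "odd m" "m < 2 * L - 1" for m
    using that ce_arc[of "m div 2" L i] unfolding ec_def by presburger
  then show "total_seq cv ce (arc i L) = map (interleave vc ec) [0..<2 * L - 1]"
    unfolding total_seq_eq_interleave[OF \<open>arc i L \<noteq> []\<close>]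
    by (intro nth_equalityI) (auto simp: interleave_def cv_arc ce_arc_odd)
qed

lemma arc_nonrepetitive:
  assumes "0 < L" and "L \<le> n"
  shows "nonrepetitive (total_seq cv ce (arc i L)) \<and> nonrepetitive (map cv (arc i L)) \<and>
    nonrepetitive (edge_seq ce (arc i L))"
proof -
  define vc where "vc j = vertex_colour ((i + j) mod n)" for j
  define ec where "ec j = edge_colour ((i + j) mod n)" for j
  have "0 < n" using three_le by simp
  have vertices: "nonrepetitive (map vc [0..<L])"
    unfolding vc_def vertex_colour_def
    using nonrepetitive_cyclic_window[OF square_free_thue_ternary _ \<open>L \<le> n\<close>] thue_ternary_less
    by (metis less_irrefl_nat)
  have "square_free (rotated_colour closing_colour \<circ> thue_ternary)"
    using square_free_comp[OF square_free_thue_ternary] inj_on_rotated_colour[OF closing_colour(1)]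
      thue_ternary_less by (metis image_subset_iff inj_on_subset lessThan_iff)
  moreover have "(rotated_colour closing_colour \<circ> thue_ternary) j \<noteq> closing_colour" for j
    using rotated_colour(1)[of closing_colour "thue_ternary j"] closing_colour(1) by simp
  ultimately have edges: "nonrepetitive (map ec [0..<L - 1])"
    unfolding ec_def edge_colour_def using \<open>L \<le> n\<close> by (intro nonrepetitive_cyclic_window) auto
  have adjacent: "interleave vc ec m \<noteq> interleave vc ec (Suc m)" for m
    using vertex_colour_neq_edge_colour edge_colour_neq_vertex_colour_Suc[of "(i + m div 2) mod n"] \<open>0 < n\<close>
    by (cases "even m") (auto simp: interleave_def vc_def ec_def mod_Suc_eq)
  have "vc a \<noteq> vc (Suc a)" for a
    using vertex_colour_neq_Suc[of "(i + a) mod n"] \<open>0 < n\<close> by (simp add: vc_def mod_Suc_eq)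
  moreover have "vc a = ec b \<Longrightarrow> vc a = 3 \<or> vc a = closing_colour" for a b
    unfolding vc_def ec_def by (rule vertex_colour_eq_edge_colour)
  ultimately have "nonrepetitive (map (interleave vc ec) [0..<2 * L - 1])"
    by (intro nonrepetitive_interleave[OF vertices adjacent])
  then show ?thesis using vertices edges arc_colour_sequences[where i = i and L = L] \<open>0 < L\<close>
    unfolding vc_def ec_def by simp
qed

lemma total_thue_colouring: "total_thue_colouring V E cv ce"
  unfolding total_thue_colouring_def
proof (intro allI impI)
  fix vs assume "is_path V E vs"
  then have "0 < length vs" "length vs \<le> n" using path_length_le unfolding is_path_def by auto
  obtain i where "vs = arc i (length vs) \<or> rev vs = arc i (length vs)"
    using path_is_arc[OF \<open>is_path V E vs\<close>] by blast
  then show "nonrepetitive (total_seq cv ce vs) \<and> nonrepetitive (map cv vs) \<and>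
      nonrepetitive (edge_seq ce vs)"
  proof
    assume "rev vs = arc i (length vs)"
    then have "nonrepetitive (total_seq cv ce (rev vs)) \<and> nonrepetitive (map cv (rev vs)) \<and>
        nonrepetitive (edge_seq ce (rev vs))"
      using arc_nonrepetitive[of "length vs" i] \<open>0 < length vs\<close> \<open>length vs \<le> n\<close> by simp
    then show ?thesis by (simp add: total_seq_rev edge_seq_rev nonrepetitive_rev_iff flip: rev_map)
  qed (use arc_nonrepetitive[of "length vs" i] \<open>0 < length vs\<close> \<open>length vs \<le> n\<close> in simp)
qed

lemma cv_ce_less: "cv v < 6" "ce e < 6"
  using colours_less unfolding cv_def ce_def by simp_all

lemma four_vertex_path:
  assumes "4 \<le> n" shows "is_path V E [f 0, f 1, f 2, f 3]"
proof -
  have "f j \<in> V" if "j < n" for j using bij that by (auto simp: bij_betw_def)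
  moreover have "{f j, f (Suc j)} \<in> E" if "j < 3" for j
    using that assms unfolding edges by (intro CollectI exI[of _ j]) simp
  ultimately show ?thesis
    using assms unfolding is_path_def by (auto simp: f_eq_iff less_Suc_eq numeral_eq_Suc)
qed

end

lemma total_seq_colours:
  assumes "is_path V E vs" shows "set (total_seq cv ce vs) \<subseteq> cv ` V \<union> ce ` E"
proof
  fix x assume "x \<in> set (total_seq cv ce vs)"
  with assms obtain m where "m < 2 * length vs - 1"
    "x = interleave (\<lambda>j. cv (vs ! j)) (\<lambda>j. ce {vs ! j, vs ! Suc j}) m"
    unfolding is_path_def by (auto simp: total_seq_eq_interleave)
  moreover have "vs ! j \<in> V" if "j < length vs" for j using assms that unfolding is_path_def by auto
  moreover have "{vs ! j, vs ! Suc j} \<in> E" if "Suc j < length vs" for j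
    using assms that unfolding is_path_def by blast
  moreover have "m div 2 < length vs" "odd m \<Longrightarrow> Suc (m div 2) < length vs"
    using calculation(1) by presburger+
  ultimately show "x \<in> cv ` V \<union> ce ` E" by (auto simp: interleave_def)
qed

theorem corollary16:
  fixes V :: "'a set" and E :: "'a set set" and f :: "nat \<Rightarrow> 'a" and n :: nat
  assumes "n \<ge> 4"
    and "bij_betw f {0..<n} V"
    and "E = {{f i, f (Suc i mod n)} | i. i < n}"
  shows "4 \<le> pi_T V E \<and> pi_T V E \<le> 6"
proof -
  interpret cycle_graph V E f n using assms by unfold_locales simp_all
  define colourable where "colourable k \<longleftrightarrow> (\<exists>cv ce. (\<forall>v\<in>V. cv v < k) \<and> (\<forall>e\<in>E. ce e < k) \<and>
    total_thue_colouring V E (cv :: 'a \<Rightarrow> nat) (ce :: 'a set \<Rightarrow> nat))" for k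
  have pi_T: "pi_T V E = (LEAST k. colourable k)" unfolding pi_T_def colourable_def ..
  have "colourable 6"
    unfolding colourable_def using cv_ce_less total_thue_colouring by (intro exI[of _ cv] exI[of _ ce]) simp
  then have "pi_T V E \<le> 6" "colourable (pi_T V E)" unfolding pi_T by (fact Least_le, fact LeastI)
  then obtain cv' ce' where bounded: "cv' ` V \<union> ce' ` E \<subseteq> {..<pi_T V E}"
    and colouring: "total_thue_colouring V E (cv' :: 'a \<Rightarrow> nat) ce'"
    unfolding colourable_def by blast
  note path = four_vertex_path[OF assms(1)]
  have "4 \<le> card (set (total_seq cv' ce' [f 0, f 1, f 2, f 3]))"
    by (rule total_thue_colouring_path4[OF colouring path])
  also have "\<dots> \<le> card {..<pi_T V E}"
    by (rule card_mono[OF finite_lessThan order_trans[OF total_seq_colours[OF path] bounded]])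
  finally show ?thesis using \<open>pi_T V E \<le> 6\<close> by simp
qed

end
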